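(* Let $\lambda>0$, $\gamma>0$, $\beta\ge 0$. Let $X$ be the Banach space of bounded analytic functions $h:[0,\lambda]\to\mathbb{R}$ with the supremum norm, $K=\{h\in X: h\ge 0,\ \|h\|_\infty\le 1\}$, and for $h\in K$ let $\Psi_h=1+\beta h$, $$D_h=\gamma\left(1+\gamma\int_0^\lambda\frac{\exp\left(-2\int_0^x\frac{\xi}{\Psi_h(\xi)}d\xi\right)}{\Psi_h(x)}\,dx\right)^{-1},$$ and define the operator $\tau:K\to X$ by $$(\tau h)(\eta)=D_h\left(\frac1\gamma+\int_0^\eta\frac{\exp\left(-2\int_0^x\frac{\xi}{\Psi_h(\xi)}d\xi\right)}{\Psi_h(x)}\,dx\right),\quad 0<\eta<\lambda.$$ Let $y\in K$. Then $y$ is a solution of \begin{align*} &[(1+\beta y(\eta))y'(\eta)]'+2\eta y'(\eta)=0, \quad 0<\eta<\lambda,\\ &y'(0)+\beta y(0)y'(0)-\gamma y(0)=0,\\ &y(\lambda)=1, \end{align*} if and only if $y$ is a fixed point of $\tau$. *)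

theory Defs
  imports "HOL-Analysis.Analysis"
begin

definition real_analytic_on :: "(real \<Rightarrow> real) \<Rightarrow> real set \<Rightarrow> bool" where
  "real_analytic_on f S \<longleftrightarrow>
     (\<forall>x\<in>S. \<exists>r>0. \<exists>a::nat \<Rightarrow> real.
        \<forall>y\<in>S. \<bar>y - x\<bar> < r \<longrightarrow> (\<lambda>n. a n * (y - x) ^ n) sums f y)"

definition spaceX :: "real \<Rightarrow> (real \<Rightarrow> real) set" where
  "spaceX lam = {h. bounded (h ` {0..lam}) \<and> real_analytic_on h {0..lam}}"

definition setK :: "real \<Rightarrow> (real \<Rightarrow> real) set" where
  "setK lam = {h \<in> spaceX lam. (\<forall>x\<in>{0..lam}. 0 \<le> h x) \<and> (\<forall>x\<in>{0..lam}. \<bar>h x\<bar> \<le> 1)}"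

definition Psi :: "real \<Rightarrow> (real \<Rightarrow> real) \<Rightarrow> real \<Rightarrow> real" where
  "Psi \<beta> h x = 1 + \<beta> * h x"

definition weight :: "real \<Rightarrow> (real \<Rightarrow> real) \<Rightarrow> real \<Rightarrow> real" where
  "weight \<beta> h x = exp (- 2 * integral {0..x} (\<lambda>\<xi>. \<xi> / Psi \<beta> h \<xi>)) / Psi \<beta> h x"

definition Dh :: "real \<Rightarrow> real \<Rightarrow> real \<Rightarrow> (real \<Rightarrow> real) \<Rightarrow> real" where
  "Dh lam \<gamma> \<beta> h = \<gamma> / (1 + \<gamma> * integral {0..lam} (weight \<beta> h))"

definition tau :: "real \<Rightarrow> real \<Rightarrow> real \<Rightarrow> (real \<Rightarrow> real) \<Rightarrow> real \<Rightarrow> real" where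
  "tau lam \<gamma> \<beta> h \<eta> = Dh lam \<gamma> \<beta> h * (1 / \<gamma> + integral {0..\<eta>} (weight \<beta> h))"

definition is_fixed_point :: "real \<Rightarrow> real \<Rightarrow> real \<Rightarrow> (real \<Rightarrow> real) \<Rightarrow> bool" where
  "is_fixed_point lam \<gamma> \<beta> y \<longleftrightarrow> (\<forall>\<eta>\<in>{0..lam}. tau lam \<gamma> \<beta> y \<eta> = y \<eta>)"

definition is_solution :: "real \<Rightarrow> real \<Rightarrow> real \<Rightarrow> (real \<Rightarrow> real) \<Rightarrow> bool" where
  "is_solution lam \<gamma> \<beta> y \<longleftrightarrow>
     (\<exists>y'. (\<forall>\<eta>\<in>{0..lam}. (y has_real_derivative y' \<eta>) (at \<eta> within {0..lam}))
        \<and> (\<forall>\<eta>\<in>{0<..<lam}.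
             ((\<lambda>t. (1 + \<beta> * y t) * y' t) has_real_derivative (- 2 * \<eta> * y' \<eta>)) (at \<eta>))
        \<and> y' 0 + \<beta> * y 0 * y' 0 - \<gamma> * y 0 = 0
        \<and> y lam = 1)"

end

theory Submission
  imports Defs
begin

text \<open>With the potential \<open>F(x) = \<integral>\<^sub>0\<^sup>x \<xi> / \<Psi>(\<xi>) d\<xi>\<close>, the equation reads
  \<open>((\<Psi> y') e\<^sup>2\<^sup>F)' = 0\<close>, so \<open>y' = c w\<close> with \<open>w = e\<^sup>-\<^sup>2\<^sup>F / \<Psi>\<close> the weight,
  and \<open>y = y(0) + c \<integral>\<^sub>0\<^sup>\<eta> w\<close>. Since \<open>\<Psi>(0) w(0) = 1\<close>, the Robin condition at \<open>0\<close> says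
  \<open>c = \<gamma> y(0)\<close>, and \<open>y(\<lambda>) = 1\<close> then fixes \<open>y(0) = 1 / (1 + \<gamma> \<integral>\<^sub>0\<^sup>\<lambda> w)\<close>.
  Both the boundary value problem and the fixed point equation are thus equivalent to
  \<open>y(\<eta>) = y(0) (1 + \<gamma> \<integral>\<^sub>0\<^sup>\<eta> w)\<close> together with \<open>y(\<lambda>) = 1\<close>.\<close>

lemma real_analytic_on_imp_continuous_on:
  assumes "real_analytic_on f S"
  shows "continuous_on S f"
  unfolding continuous_on_eq_continuous_within
proof
  fix x assume x: "x \<in> S"
  obtain r a where r: "r > 0"
    and sums: "\<And>z. z \<in> S \<Longrightarrow> \<bar>z - x\<bar> < r \<Longrightarrow> (\<lambda>n. a n * (z - x) ^ n) sums f z"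
    using assms x unfolding real_analytic_on_def by blast
  show "continuous (at x within S) f"
  proof (cases "x islimpt S")
    case False
    then show ?thesis by (intro continuous_trivial_limit) (simp add: trivial_limit_within)
  next
    case True
    then obtain z where z: "z \<in> S" "z \<noteq> x" "\<bar>z - x\<bar> < r"
      using r by (auto simp: islimpt_approachable dist_real_def)
    define P where "P t = (\<Sum>n. a n * t ^ n)" for t
    have "summable (\<lambda>n. a n * (z - x) ^ n)"
      using sums[OF z(1,3)] by (simp add: sums_iff)
    then have "isCont P 0"
      unfolding P_def using isCont_powser[of a "z - x" 0] z(2) by simp
    moreover have "isCont (\<lambda>t. t - x) x"
      by (intro continuous_intros)
    ultimately have "isCont (\<lambda>t. P (t - x)) x"
      using isCont_o2[where f = "\<lambda>t. t - x" and a = x and g = P] by simp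
    then have "continuous (at x within S) (\<lambda>t. P (t - x))"
      by (rule continuous_at_imp_continuous_at_within)
    then show ?thesis
    proof (rule continuous_transform_within[OF _ r x])
      fix t assume "t \<in> S" "dist t x < r"
      then show "P (t - x) = f t"
        using sums by (auto simp: P_def dist_real_def sums_iff)
    qed
  qed
qed

definition potential :: "real \<Rightarrow> (real \<Rightarrow> real) \<Rightarrow> real \<Rightarrow> real" where
  "potential \<beta> h x = integral {0..x} (\<lambda>\<xi>. \<xi> / Psi \<beta> h \<xi>)"

lemma weight_eq_potential: "weight \<beta> h x = exp (- 2 * potential \<beta> h x) / Psi \<beta> h x"
  by (simp add: weight_def potential_def)

lemma potential_0 [simp]: "potential \<beta> h 0 = 0"
  by (simp add: potential_def)

lemma Psi_pos: "0 \<le> \<beta> \<Longrightarrow> 0 \<le> h x \<Longrightarrow> 0 < Psi \<beta> h x"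
  by (simp add: Psi_def add_pos_nonneg)

context
  fixes lam \<beta> :: real and h :: "real \<Rightarrow> real"
  assumes lam_pos: "0 < lam"
    and continuous_h: "continuous_on {0..lam} h"
    and Psi_pos_on: "\<And>x. x \<in> {0..lam} \<Longrightarrow> 0 < Psi \<beta> h x"
begin

lemma continuous_on_Psi: "continuous_on {0..lam} (Psi \<beta> h)"
  unfolding Psi_def[abs_def] by (intro continuous_intros continuous_h)

lemma has_real_derivative_potential:
  assumes "t \<in> {0..lam}"
  shows "(potential \<beta> h has_real_derivative t / Psi \<beta> h t) (at t within {0..lam})"
proof -
  have "continuous_on {0..lam} (\<lambda>\<xi>. \<xi> / Psi \<beta> h \<xi>)"
    by (intro continuous_on_divide continuous_on_id continuous_on_Psi ballI notI)
       (use Psi_pos_on in fastforce)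
  then show ?thesis
    unfolding potential_def[abs_def] using assms by (rule integral_has_real_derivative)
qed

lemma continuous_on_potential: "continuous_on {0..lam} (potential \<beta> h)"
  using has_real_derivative_potential by (intro DERIV_continuous_on) blast

lemma Psi_mult_weight:
  "x \<in> {0..lam} \<Longrightarrow> Psi \<beta> h x * weight \<beta> h x = exp (- 2 * potential \<beta> h x)"
  using Psi_pos_on[of x] by (simp add: weight_eq_potential)

lemma continuous_on_weight: "continuous_on {0..lam} (weight \<beta> h)"
  unfolding weight_eq_potential[abs_def]
  by (intro continuous_intros continuous_on_potential continuous_on_Psi) (auto dest: Psi_pos_on)

lemma has_real_derivative_weight_integral:
  "t \<in> {0..lam} \<Longrightarrow>
    ((\<lambda>\<eta>. integral {0..\<eta>} (weight \<beta> h)) has_real_derivative weight \<beta> h t) (at t within {0..lam})"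
  by (rule integral_has_real_derivative[OF continuous_on_weight])

lemma continuous_on_weight_integral:
  "continuous_on {0..lam} (\<lambda>\<eta>. integral {0..\<eta>} (weight \<beta> h))"
  using has_real_derivative_weight_integral by (intro DERIV_continuous_on) blast

lemma weight_integral_nonneg: "0 \<le> integral {0..lam} (weight \<beta> h)"
proof (rule integral_nonneg)
  show "weight \<beta> h integrable_on {0..lam}"
    by (rule integrable_continuous_interval[OF continuous_on_weight])
  show "0 \<le> weight \<beta> h x" if "x \<in> {0..lam}" for x
    using Psi_pos_on[OF that] by (simp add: weight_eq_potential)
qed

lemma flux_proportional_to_weight:
  assumes ode: "\<And>t. t \<in> {0<..<lam} \<Longrightarrow>
      ((\<lambda>s. (1 + \<beta> * h s) * y' s) has_real_derivative (- 2 * t * y' t)) (at t)"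
  obtains c where "\<And>t. t \<in> {0<..<lam} \<Longrightarrow> y' t = c * weight \<beta> h t"
proof -
  define F where "F = potential \<beta> h"
  define k where "k t = Psi \<beta> h t * y' t * exp (2 * F t)" for t
  have "(k has_real_derivative 0) (at t within {0<..<lam})" if t: "t \<in> {0<..<lam}" for t
  proof -
    have F': "(F has_real_derivative t / Psi \<beta> h t) (at t)"
      using has_real_derivative_potential[of t] t
      by (simp add: F_def at_within_Icc_at)
    have "(k has_real_derivative
        (- 2 * t * y' t) * exp (2 * F t) + exp (2 * F t) * (2 * (t / Psi \<beta> h t)) * (Psi \<beta> h t * y' t))
        (at t)" (is "(_ has_real_derivative ?D) _")
      unfolding k_def Psi_def
      by (intro DERIV_mult ode t DERIV_chain2[OF DERIV_exp] DERIV_cmult F'[unfolded Psi_def])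
    moreover have "Psi \<beta> h t \<noteq> 0"
      using Psi_pos_on[of t] t by simp
    then have "?D = 0"
      by simp
    ultimately show ?thesis
      by (metis has_field_derivative_at_within)
  qed
  then obtain c where c: "\<And>t. t \<in> {0<..<lam} \<Longrightarrow> k t = c"
    using has_field_derivative_zero_constant[of "{0<..<lam}" k] by auto
  show ?thesis
  proof (rule that)
    fix t assume t: "t \<in> {0<..<lam}"
    have "Psi \<beta> h t \<noteq> 0"
      using Psi_pos_on[of t] t by simp
    then have "y' t = c / (Psi \<beta> h t * exp (2 * F t))"
      using c[OF t] by (auto simp: k_def)
    also have "\<dots> = c * weight \<beta> h t"
      by (simp add: weight_eq_potential F_def exp_minus field_simps)
    finally show "y' t = c * weight \<beta> h t" .
  qed
qed

lemma eq_weight_integral_if_derivative: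
  assumes y': "\<And>t. t \<in> {0..lam} \<Longrightarrow> (h has_real_derivative y' t) (at t within {0..lam})"
    and c: "\<And>t. t \<in> {0<..<lam} \<Longrightarrow> y' t = c * weight \<beta> h t"
    and \<eta>: "\<eta> \<in> {0..lam}"
  shows "h \<eta> = h 0 + c * integral {0..\<eta>} (weight \<beta> h)"
proof -
  define G where "G \<eta> = integral {0..\<eta>} (weight \<beta> h)" for \<eta>
  have "h \<eta> - c * G \<eta> = h 0 - c * G 0"
  proof (rule DERIV_isconst2[OF lam_pos, where f = "\<lambda>t. h t - c * G t"])
    show "continuous_on {0..lam} (\<lambda>t. h t - c * G t)"
      unfolding G_def by (intro continuous_on_diff continuous_on_mult_left continuous_h continuous_on_weight_integral)
    fix t assume "0 < t" "t < lam"
    then have t: "t \<in> {0<..<lam}" and t': "t \<in> {0..lam}" by simp_all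
    have "((\<lambda>t. h t - c * G t) has_real_derivative y' t - c * weight \<beta> h t) (at t within {0..lam})"
      unfolding G_def by (rule DERIV_diff[OF y'[OF t'] DERIV_cmult[OF has_real_derivative_weight_integral[OF t']]])
    then show "((\<lambda>t. h t - c * G t) has_real_derivative 0) (at t)"
      using c[OF t] t by (simp add: at_within_Icc_at)
  qed (use \<eta> in auto)
  then show ?thesis
    by (simp add: G_def)
qed

lemma weight_integral_form_if_is_solution:
  assumes "is_solution lam \<gamma> \<beta> h"
  shows "(\<forall>\<eta>\<in>{0..lam}. h \<eta> = h 0 * (1 + \<gamma> * integral {0..\<eta>} (weight \<beta> h))) \<and> h lam = 1"
proof -
  obtain y' where
      y': "\<And>t. t \<in> {0..lam} \<Longrightarrow> (h has_real_derivative y' t) (at t within {0..lam})"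
    and ode: "\<And>t. t \<in> {0<..<lam} \<Longrightarrow>
      ((\<lambda>s. (1 + \<beta> * h s) * y' s) has_real_derivative (- 2 * t * y' t)) (at t)"
    and robin: "y' 0 + \<beta> * h 0 * y' 0 - \<gamma> * h 0 = 0"
    and right: "h lam = 1"
    using assms unfolding is_solution_def by blast
  have "(h has_real_derivative y' t) (at t)" if "t \<in> {0<..<lam}" for t
    using y'[of t] that by (simp add: at_within_Icc_at)
  then obtain c where c: "\<And>t. t \<in> {0<..<lam} \<Longrightarrow> y' t = c * weight \<beta> h t"
    using flux_proportional_to_weight ode by blast
  have explicit: "h \<eta> = h 0 + c * integral {0..\<eta>} (weight \<beta> h)" if "\<eta> \<in> {0..lam}" for \<eta>
    using y' c that by (rule eq_weight_integral_if_derivative)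
  have 0: "0 \<in> {0..lam}"
    using lam_pos by simp
  have "((\<lambda>t. h 0 + c * integral {0..t} (weight \<beta> h)) has_real_derivative 0 + c * weight \<beta> h 0)
      (at 0 within {0..lam})"
    by (intro DERIV_add DERIV_const DERIV_cmult has_real_derivative_weight_integral 0)
  then have "(h has_real_derivative 0 + c * weight \<beta> h 0) (at 0 within {0..lam})"
    by (rule has_field_derivative_transform_within[where d = 1])
       (use 0 in \<open>auto intro: explicit[symmetric]\<close>)
  then have y'0: "y' 0 = 0 + c * weight \<beta> h 0"
    by (rule has_field_derivative_unique[OF y'[OF 0]])
       (use lam_pos in \<open>simp add: at_within_Icc_at_right\<close>)
  have "c = c * (Psi \<beta> h 0 * weight \<beta> h 0)"
    using Psi_mult_weight[OF 0] by simp
  also have "\<dots> = Psi \<beta> h 0 * y' 0"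
    using y'0 by simp
  also have "\<dots> = \<gamma> * h 0"
    using robin by (simp add: Psi_def algebra_simps)
  finally have c0: "c = \<gamma> * h 0" .
  show "(\<forall>\<eta>\<in>{0..lam}. h \<eta> = h 0 * (1 + \<gamma> * integral {0..\<eta>} (weight \<beta> h))) \<and> h lam = 1"
  proof (intro conjI ballI right)
    fix \<eta> assume "\<eta> \<in> {0..lam}"
    from explicit[OF this] show "h \<eta> = h 0 * (1 + \<gamma> * integral {0..\<eta>} (weight \<beta> h))"
      by (simp add: c0 algebra_simps)
  qed
qed

lemma is_solution_if_weight_integral_form:
  assumes form: "\<And>\<eta>. \<eta> \<in> {0..lam} \<Longrightarrow> h \<eta> = h 0 * (1 + \<gamma> * integral {0..\<eta>} (weight \<beta> h))"
    and right: "h lam = 1"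
  shows "is_solution lam \<gamma> \<beta> h"
proof -
  define a where "a = \<gamma> * h 0"
  show ?thesis
    unfolding is_solution_def
  proof (intro exI[of _ "\<lambda>t. a * weight \<beta> h t"] conjI ballI right)
    fix t assume t: "t \<in> {0..lam}"
    have "((\<lambda>s. h 0 * (1 + \<gamma> * integral {0..s} (weight \<beta> h))) has_real_derivative
        h 0 * (0 + \<gamma> * weight \<beta> h t)) (at t within {0..lam})"
      by (intro DERIV_cmult DERIV_add DERIV_const has_real_derivative_weight_integral t)
    then have "((\<lambda>s. h 0 * (1 + \<gamma> * integral {0..s} (weight \<beta> h))) has_real_derivative
        a * weight \<beta> h t) (at t within {0..lam})"
      by (simp add: a_def mult_ac)
    then show "(h has_real_derivative a * weight \<beta> h t) (at t within {0..lam})"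
      by (rule has_field_derivative_transform_within[where d = 1])
         (use t in \<open>auto intro: form[symmetric]\<close>)
  next
    fix t assume t: "t \<in> {0<..<lam}"
    have "((\<lambda>s. a * exp (- 2 * potential \<beta> h s)) has_real_derivative
        a * (exp (- 2 * potential \<beta> h t) * (- 2 * (t / Psi \<beta> h t)))) (at t)"
      using has_real_derivative_potential[of t] t
      by (intro DERIV_cmult DERIV_chain2[OF DERIV_exp])
         (auto simp: at_within_Icc_at)
    moreover have "a * (exp (- 2 * potential \<beta> h t) * (- 2 * (t / Psi \<beta> h t))) =
        - 2 * t * (a * weight \<beta> h t)"
      by (simp add: weight_eq_potential)
    ultimately have D: "((\<lambda>s. a * exp (- 2 * potential \<beta> h s)) has_real_derivative
        - 2 * t * (a * weight \<beta> h t)) (at t)"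
      by simp
    have eq: "a * exp (- 2 * potential \<beta> h s) = (1 + \<beta> * h s) * (a * weight \<beta> h s)"
      if "s \<in> {0<..<lam}" for s
      using Psi_mult_weight[of s] that by (simp add: Psi_def)
    show "((\<lambda>s. (1 + \<beta> * h s) * (a * weight \<beta> h s)) has_real_derivative
        - 2 * t * (a * weight \<beta> h t)) (at t)"
      by (rule has_field_derivative_transform_within_open[OF D _ t]) (simp, fact eq)
  next
    have "a * weight \<beta> h 0 + \<beta> * h 0 * (a * weight \<beta> h 0) = a * (Psi \<beta> h 0 * weight \<beta> h 0)"
      by (simp add: Psi_def algebra_simps)
    also have "\<dots> = \<gamma> * h 0"
      using Psi_mult_weight[of 0] lam_pos by (simp add: a_def)
    finally show "a * weight \<beta> h 0 + \<beta> * h 0 * (a * weight \<beta> h 0) - \<gamma> * h 0 = 0"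
      by simp
  qed
qed

lemma is_solution_iff_weight_integral_form:
  "is_solution lam \<gamma> \<beta> h \<longleftrightarrow>
    (\<forall>\<eta>\<in>{0..lam}. h \<eta> = h 0 * (1 + \<gamma> * integral {0..\<eta>} (weight \<beta> h))) \<and> h lam = 1"
  using weight_integral_form_if_is_solution is_solution_if_weight_integral_form by blast

lemma is_fixed_point_iff_weight_integral_form:
  assumes "0 < \<gamma>"
  shows "is_fixed_point lam \<gamma> \<beta> h \<longleftrightarrow>
    (\<forall>\<eta>\<in>{0..lam}. h \<eta> = h 0 * (1 + \<gamma> * integral {0..\<eta>} (weight \<beta> h))) \<and> h lam = 1"
proof -
  define I where "I = integral {0..lam} (weight \<beta> h)"
  have pos: "0 < 1 + \<gamma> * I"
    using assms weight_integral_nonneg by (simp add: I_def add_pos_nonneg)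
  have tau: "tau lam \<gamma> \<beta> h \<eta> = (1 + \<gamma> * integral {0..\<eta>} (weight \<beta> h)) / (1 + \<gamma> * I)" for \<eta>
  proof -
    have "\<gamma> * (1 / \<gamma> + integral {0..\<eta>} (weight \<beta> h)) = 1 + \<gamma> * integral {0..\<eta>} (weight \<beta> h)"
      using assms by (simp add: distrib_left)
    then show ?thesis
      by (simp add: tau_def Dh_def I_def)
  qed
  have ends: "0 \<in> {0..lam}" "lam \<in> {0..lam}"
    using lam_pos by auto
  show ?thesis
    unfolding is_fixed_point_def
  proof safe
    assume fixed: "\<forall>\<eta>\<in>{0..lam}. tau lam \<gamma> \<beta> h \<eta> = h \<eta>"
    have "h 0 = 1 / (1 + \<gamma> * I)"
      using fixed[rule_format, OF ends(1)] tau[of 0] by simp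
    then show "h \<eta> = h 0 * (1 + \<gamma> * integral {0..\<eta>} (weight \<beta> h))" if "\<eta> \<in> {0..lam}" for \<eta>
      using fixed[rule_format, OF that] tau[of \<eta>] by simp
    show "h lam = 1"
      using fixed[rule_format, OF ends(2)] tau[of lam] pos by (simp add: I_def)
  next
    fix \<eta> assume form: "\<forall>\<eta>\<in>{0..lam}. h \<eta> = h 0 * (1 + \<gamma> * integral {0..\<eta>} (weight \<beta> h))"
      and right: "h lam = 1" and \<eta>: "\<eta> \<in> {0..lam}"
    have "h 0 = 1 / (1 + \<gamma> * I)"
      using form[rule_format, OF ends(2)] right pos by (simp add: I_def field_simps)
    then show "tau lam \<gamma> \<beta> h \<eta> = h \<eta>"
      using form[rule_format, OF \<eta>] tau[of \<eta>] by simp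
  qed
qed

end

theorem theorem3p2:
  fixes lam \<gamma> \<beta> :: real and y :: "real \<Rightarrow> real"
  assumes "lam > 0" and "\<gamma> > 0" and "\<beta> \<ge> 0"
    and "y \<in> setK lam"
  shows "is_solution lam \<gamma> \<beta> y \<longleftrightarrow> is_fixed_point lam \<gamma> \<beta> y"
proof -
  have "continuous_on {0..lam} y"
    using assms(4) by (auto simp: setK_def spaceX_def intro: real_analytic_on_imp_continuous_on)
  moreover have "\<And>x. x \<in> {0..lam} \<Longrightarrow> 0 < Psi \<beta> y x"
    using assms(3,4) by (auto simp: setK_def intro: Psi_pos)
  ultimately show ?thesis
    using is_solution_iff_weight_integral_form[OF assms(1)]
      is_fixed_point_iff_weight_integral_form[OF assms(1) _ _ assms(2)]
    by simp
qed

end
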